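(* Let $x\in W_n$ and $1\le k\le n-1$. Then $\ell(xs_k)>\ell(x)$ if and only if $\ell(txs_k)>\ell(tx)$.
   Context: $W_n$ is the Weyl group of type $B_n$ with Coxeter generators $t,s_1,\dots,s_{n-1}$ ($(ts_1)^4=1$, $(s_is_{i+1})^3=1$, other distinct pairs commute), and $\ell$ is its length function. *)

theory Defs
  imports Main
begin

text \<open>Concrete model of the Weyl group W_n of type B_n: the group of signed
permutations of {-n..-1,1..n}, realised as functions int => int, generated by
the Coxeter generators t (sign change of 1) and s_i (swap i and i+1, and
simultaneously -i and -(i+1)). Group multiplication is composition.\<close>

definition tB :: "int \<Rightarrow> int" where
  "tB = (\<lambda>j. if j = 1 then -1 else if j = -1 then 1 else j)"

definition sB :: "nat \<Rightarrow> int \<Rightarrow> int" where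
  "sB i = (\<lambda>j. if j = int i then int i + 1
              else if j = int i + 1 then int i
              else if j = - int i then - (int i + 1)
              else if j = - (int i + 1) then - int i
              else j)"

definition gensB :: "nat \<Rightarrow> (int \<Rightarrow> int) set" where
  "gensB n = {tB} \<union> {sB i | i. 1 \<le> i \<and> i \<le> n - 1}"

definition word_prod :: "(int \<Rightarrow> int) list \<Rightarrow> int \<Rightarrow> int" where
  "word_prod ws = foldr (\<circ>) ws id"

definition WB :: "nat \<Rightarrow> (int \<Rightarrow> int) set" where
  "WB n = {word_prod ws | ws. set ws \<subseteq> gensB n}"

definition lenB :: "nat \<Rightarrow> (int \<Rightarrow> int) \<Rightarrow> nat" where
  "lenB n w = (LEAST m. \<exists>ws. length ws = m \<and> set ws \<subseteq> gensB n \<and> word_prod ws = w)"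

end

theory Submission
  imports Defs
begin

text \<open>The statistic \<open>inv(w) + neg(w)\<close>, with
inversions counted over all of \<open>\<plusminus>[n]\<close>, changes by exactly \<open>\<plusminus>2\<close> under right multiplication by a
generator (it grows under \<open>s\<^sub>k\<close> iff \<open>w(k) < w(k+1)\<close>, and under \<open>t\<close> iff \<open>w(1) > 0\<close>), and
every element other than the identity has a generator that decreases it; hence it equals
\<open>2\<ell>(w)\<close>. So \<open>\<ell>(x s\<^sub>k) > \<ell>(x)\<close> iff \<open>x(k) < x(k+1)\<close>. Left multiplication by \<open>t\<close> only
exchanges the values \<open>\<plusminus>1\<close>, and since \<open>x(k)\<close>, \<open>x(k+1)\<close> are nonzero with \<open>x(k+1) \<noteq> -x(k)\<close>,
it does not change which of the two is larger.\<close>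

definition signed_support :: "nat \<Rightarrow> int set" where
  "signed_support n = {i. 1 \<le> \<bar>i\<bar> \<and> \<bar>i\<bar> \<le> int n}"

definition signed_perm :: "nat \<Rightarrow> (int \<Rightarrow> int) \<Rightarrow> bool" where
  "signed_perm n w \<longleftrightarrow> (\<forall>i. w (- i) = - w i) \<and> (\<forall>i\<in>signed_support n. w i \<in> signed_support n)
     \<and> inj_on w (signed_support n) \<and> (\<forall>i. i \<notin> signed_support n \<longrightarrow> w i = i)"

definition inversions :: "nat \<Rightarrow> (int \<Rightarrow> int) \<Rightarrow> int" where
  "inversions n w = (\<Sum>(a, b)\<in>signed_support n \<times> signed_support n.
     if a < b \<and> w b < w a then 1 else 0)"

definition negatives :: "nat \<Rightarrow> (int \<Rightarrow> int) \<Rightarrow> int" where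
  "negatives n w = (\<Sum>i\<in>{1..int n}. if w i < 0 then 1 else 0)"

text \<open>Twice the Coxeter length, see \<open>lenB_eq_inv_len\<close>.\<close>
definition inv_len :: "nat \<Rightarrow> (int \<Rightarrow> int) \<Rightarrow> int" where
  "inv_len n w = inversions n w + negatives n w"

lemma finite_signed_support: "finite (signed_support n)"
  by (rule finite_subset[of _ "{-int n..int n}"]) (auto simp: signed_support_def)

lemma inversions_comp_involution:
  assumes maps: "\<And>a. a \<in> signed_support n \<Longrightarrow> g a \<in> signed_support n"
    and invol: "\<And>a. g (g a) = a"
    and F: "F \<subseteq> signed_support n \<times> signed_support n"
    and order: "\<And>a b. a \<in> signed_support n \<Longrightarrow> b \<in> signed_support n \<Longrightarrow> (a, b) \<notin> F \<Longrightarrow>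
                  g a < g b \<longleftrightarrow> a < b"
  shows "inversions n (w \<circ> g) = inversions n w +
    (\<Sum>(a, b)\<in>F. (if g a < g b \<and> w b < w a then 1 else 0) - (if a < b \<and> w b < w a then 1 else 0))"
proof -
  let ?S = "signed_support n \<times> signed_support n"
  define new where "new = (\<lambda>(a, b). if g a < g b \<and> w b < w a then 1 else (0::int))"
  define old where "old = (\<lambda>(a, b). if a < b \<and> w b < w a then 1 else (0::int))"
  have "inversions n (w \<circ> g) = sum new ?S"
    unfolding inversions_def new_def
    by (rule sum.reindex_bij_witness[where i="map_prod g g" and j="map_prod g g"])
      (auto simp: invol maps)
  moreover have "sum new ?S - sum old ?S = (\<Sum>p\<in>F. new p - old p)"
    unfolding sum_subtractf[symmetric]
    by (rule sum.mono_neutral_right) (auto simp: finite_signed_support F order new_def old_def)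
  moreover have "sum old ?S = inversions n w"
    by (simp add: inversions_def old_def)
  ultimately show ?thesis
    by (simp add: new_def old_def case_prod_unfold)
qed

lemma negatives_comp:
  assumes "F \<subseteq> {1..int n}" and "\<And>i. i \<in> {1..int n} \<Longrightarrow> i \<notin> F \<Longrightarrow> g i = i"
  shows "negatives n (w \<circ> g) = negatives n w +
    (\<Sum>i\<in>F. (if w (g i) < 0 then 1 else 0) - (if w i < 0 then 1 else 0))"
proof -
  have "negatives n (w \<circ> g) - negatives n w =
      (\<Sum>i\<in>{1..int n}. (if w (g i) < 0 then 1 else 0) - (if w i < 0 then 1 else (0::int)))"
    by (simp add: negatives_def sum_subtractf)
  also have "\<dots> = (\<Sum>i\<in>F. (if w (g i) < 0 then 1 else 0) - (if w i < 0 then 1 else 0))"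
    by (rule sum.mono_neutral_right) (use assms in auto)
  finally show ?thesis by simp
qed

lemma signed_perm_id: "signed_perm n id"
  by (auto simp: signed_perm_def)

lemma signed_perm_comp: "signed_perm n v \<Longrightarrow> signed_perm n w \<Longrightarrow> signed_perm n (v \<circ> w)"
  unfolding signed_perm_def by (auto intro!: comp_inj_on intro: inj_on_subset)

lemma signed_perm_odd: "signed_perm n w \<Longrightarrow> w (- i) = - w i"
  by (simp add: signed_perm_def)

lemma signed_perm_in_support: "signed_perm n w \<Longrightarrow> i \<in> signed_support n \<Longrightarrow> w i \<in> signed_support n"
  by (simp add: signed_perm_def)

lemma signed_perm_eq_iff:
  "signed_perm n w \<Longrightarrow> i \<in> signed_support n \<Longrightarrow> j \<in> signed_support n \<Longrightarrow> w i = w j \<longleftrightarrow> i = j"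
  unfolding signed_perm_def by (meson inj_onD)

lemma tB_tB: "tB (tB a) = a"
  by (simp add: tB_def)

lemma sB_sB: "1 \<le> k \<Longrightarrow> sB k (sB k a) = a"
  by (auto simp: sB_def)

lemma signed_perm_tB: "1 \<le> n \<Longrightarrow> signed_perm n tB"
  unfolding signed_perm_def signed_support_def tB_def inj_on_def by auto

lemma signed_perm_sB: "1 \<le> k \<Longrightarrow> k + 1 \<le> n \<Longrightarrow> signed_perm n (sB k)"
  unfolding signed_perm_def signed_support_def sB_def inj_on_def by auto

lemma tB_less_iff:
  assumes "a \<noteq> 0" "b \<noteq> 0" "(a, b) \<notin> {(-1, 1), (1, -1)}"
  shows "tB a < tB b \<longleftrightarrow> a < b"
  using assms by (auto simp: tB_def)

lemma sB_less_iff: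
  assumes "1 \<le> k"
    and "(a, b) \<notin> {(int k, int k + 1), (int k + 1, int k), (- int k - 1, - int k), (- int k, - int k - 1)}"
  shows "sB k a < sB k b \<longleftrightarrow> a < b"
proof -
  have near: "x - 1 \<le> sB k x \<and> sB k x \<le> x + 1" for x
    by (auto simp: sB_def)
  have step: "sB k x < sB k (x + 1)" if "x \<noteq> int k" "x \<noteq> - int k - 1" for x
    using that assms(1) by (auto simp: sB_def)
  consider "\<bar>a - b\<bar> \<ge> 3" | "\<bar>a - b\<bar> = 2" | "b = a + 1" | "a = b + 1" | "a = b"
    by linarith
  then show ?thesis
  proof cases
    case 1 then show ?thesis using near[of a] near[of b] by linarith
  next
    case 2 then show ?thesis using assms(1) by (auto simp: sB_def abs_if split: if_splits)
  next
    case 3 then show ?thesis using step[of a] assms(2) by auto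
  next
    case 4 then show ?thesis using step[of b] assms(2) by auto
  qed simp
qed

lemma inv_len_comp_sB:
  assumes w: "signed_perm n w" and k: "1 \<le> k" "k + 1 \<le> n"
  shows "inv_len n (w \<circ> sB k) = inv_len n w + (if w (int k) < w (int k + 1) then 2 else -2)"
proof -
  define F where "F = {(int k, int k + 1), (int k + 1, int k), (- int k - 1, - int k), (- int k, - int k - 1)}"
  have "int k \<in> signed_support n" "int k + 1 \<in> signed_support n"
    using k by (auto simp: signed_support_def)
  then have "w (int k) \<noteq> w (int k + 1)"
    using signed_perm_eq_iff[OF w] by simp
  moreover have "w (- int k - 1) = - w (int k + 1)"
    using signed_perm_odd[OF w, of "int k + 1"] by simp
  moreover have "sB k (int k) = int k + 1" "sB k (int k + 1) = int k"
    "sB k (- int k - 1) = - int k" "sB k (- int k) = - int k - 1"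
    using k by (auto simp: sB_def)
  ultimately have swapped: "(\<Sum>(a, b)\<in>F. (if sB k a < sB k b \<and> w b < w a then 1 else 0)
      - (if a < b \<and> w b < w a then 1 else (0::int))) = (if w (int k) < w (int k + 1) then 2 else -2)"
    unfolding F_def by (simp add: signed_perm_odd[OF w])
  have "inversions n (w \<circ> sB k) = inversions n w + (if w (int k) < w (int k + 1) then 2 else -2)"
    unfolding swapped[symmetric]
  proof (rule inversions_comp_involution)
    show "F \<subseteq> signed_support n \<times> signed_support n"
      using k by (auto simp: F_def signed_support_def)
  qed (use k sB_sB sB_less_iff signed_perm_in_support[OF signed_perm_sB[OF k]] in \<open>auto simp: F_def\<close>)
  moreover have "negatives n (w \<circ> sB k) = negatives n w"
    unfolding negatives_def
    by (rule sum.reindex_bij_witness[where i="sB k" and j="sB k"]) (use k in \<open>auto simp: sB_def\<close>)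
  ultimately show ?thesis
    by (simp add: inv_len_def)
qed

lemma inv_len_comp_tB:
  assumes w: "signed_perm n w" and n: "1 \<le> n"
  shows "inv_len n (w \<circ> tB) = inv_len n w + (if 0 < w 1 then 2 else -2)"
proof -
  have "1 \<in> signed_support n"
    using n by (simp add: signed_support_def)
  then have "w 1 \<noteq> 0"
    using signed_perm_in_support[OF w] by (fastforce simp: signed_support_def)
  then have flip: "(\<Sum>(a, b)\<in>{(-1, 1), (1, -1)}. (if tB a < tB b \<and> w b < w a then 1 else 0)
      - (if a < b \<and> w b < w a then 1 else (0::int))) = (if 0 < w 1 then 1 else -1)"
    "(\<Sum>i\<in>{1}. (if w (tB i) < 0 then 1 else 0) - (if w i < 0 then 1 else (0::int)))
      = (if 0 < w 1 then 1 else -1)"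
    by (auto simp: tB_def signed_perm_odd[OF w])
  have "inversions n (w \<circ> tB) = inversions n w + (if 0 < w 1 then 1 else -1)"
    unfolding flip(1)[symmetric]
  proof (rule inversions_comp_involution)
    show "tB a < tB b \<longleftrightarrow> a < b"
      if "a \<in> signed_support n" "b \<in> signed_support n" "(a, b) \<notin> {(-1, 1), (1, -1)}" for a b
      using that by (intro tB_less_iff) (auto simp: signed_support_def)
  qed (use n tB_tB signed_perm_in_support[OF signed_perm_tB[OF n]] in \<open>auto simp: signed_support_def\<close>)
  moreover have "negatives n (w \<circ> tB) = negatives n w + (if 0 < w 1 then 1 else -1)"
    unfolding flip(2)[symmetric] by (rule negatives_comp) (use n in \<open>auto simp: tB_def\<close>)
  ultimately show ?thesis
    by (simp add: inv_len_def)
qed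

lemma tB_in_gensB: "tB \<in> gensB n"
  by (simp add: gensB_def)

lemma sB_in_gensB: "1 \<le> k \<Longrightarrow> k + 1 \<le> n \<Longrightarrow> sB k \<in> gensB n"
  by (auto simp: gensB_def)

lemma signed_perm_ascending_eq_id:
  assumes w: "signed_perm n w" and pos: "0 < w 1"
    and asc: "\<And>i. 1 \<le> i \<Longrightarrow> i < int n \<Longrightarrow> w i < w (i + 1)"
  shows "w = id"
proof -
  have range: "\<bar>w i\<bar> \<le> int n" if "1 \<le> i" "i \<le> int n" for i
    using signed_perm_in_support[OF w, of i] that by (simp add: signed_support_def)
  have lower: "i \<le> w i" if "1 \<le> i" "i \<le> int n" for i
    using that
  proof (induction i rule: int_ge_induct)
    case (step i)
    then show ?case using asc[of i] by simp
  qed (use pos in simp)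
  have upper: "w i \<le> i" if "i \<le> int n" "1 \<le> i" for i
    using that
  proof (induction i rule: int_le_induct)
    case base
    then show ?case using range[of "int n"] by simp
  next
    case (step i)
    then show ?case using asc[of "i - 1"] by simp
  qed
  have "w i = i" for i
  proof (cases "i \<in> signed_support n")
    case True
    then consider "1 \<le> i" "i \<le> int n" | "1 \<le> - i" "- i \<le> int n"
      by (auto simp: signed_support_def abs_if split: if_splits)
    then show ?thesis
    proof cases
      case 2
      then show ?thesis using lower[of "- i"] upper[of "- i"] signed_perm_odd[OF w, of i] by simp
    qed (use lower upper in force)
  next
    case False
    then show ?thesis using w by (simp add: signed_perm_def)
  qed
  then show ?thesis by auto
qed

lemma inv_len_descent:
  assumes w: "signed_perm n w" and n: "1 \<le> n" and "w \<noteq> id"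
  obtains g where "g \<in> gensB n" "inv_len n (w \<circ> g) = inv_len n w - 2"
proof -
  have "1 \<in> signed_support n"
    using n by (simp add: signed_support_def)
  then have "w 1 \<noteq> 0"
    using signed_perm_in_support[OF w] by (fastforce simp: signed_support_def)
  consider "w 1 < 0" | i where "1 \<le> i" "i < int n" "w (i + 1) < w i"
  proof (cases "w 1 < 0")
    case False
    then have "0 < w 1" using \<open>w 1 \<noteq> 0\<close> by simp
    then obtain i where "1 \<le> i" "i < int n" "\<not> w i < w (i + 1)"
      using signed_perm_ascending_eq_id[OF w] \<open>w \<noteq> id\<close> by blast
    moreover have "w i \<noteq> w (i + 1)"
      using calculation signed_perm_eq_iff[OF w, of i "i + 1"] by (simp add: signed_support_def)
    ultimately show ?thesis using that(2) by simp
  qed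
  then show ?thesis
  proof cases
    case 1
    then show ?thesis
      using that[OF tB_in_gensB] inv_len_comp_tB[OF w n] by simp
  next
    case (2 i)
    define k where "k = nat i"
    have k: "i = int k" "1 \<le> k" "k + 1 \<le> n"
      using 2 by (auto simp: k_def)
    then show ?thesis
      using that[OF sB_in_gensB[OF k(2,3)]] inv_len_comp_sB[OF w k(2,3)] 2 by simp
  qed
qed

lemma word_prod_Nil: "word_prod [] = id"
  by (simp add: word_prod_def)

lemma word_prod_append: "word_prod (vs @ ws) = word_prod vs \<circ> word_prod ws"
  by (induction vs) (simp_all add: word_prod_def)

lemma word_prod_Cons: "word_prod (g # ws) = g \<circ> word_prod ws"
  by (simp add: word_prod_def)

lemma word_prod_snoc: "word_prod (ws @ [g]) = word_prod ws \<circ> g"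
  by (simp add: word_prod_append word_prod_Cons word_prod_Nil)

lemma signed_perm_gensB: "g \<in> gensB n \<Longrightarrow> 1 \<le> n \<Longrightarrow> signed_perm n g"
  by (auto simp: gensB_def intro: signed_perm_tB signed_perm_sB)

lemma gensB_involution: "g \<in> gensB n \<Longrightarrow> g \<circ> g = id"
  by (auto simp: gensB_def fun_eq_iff tB_tB sB_sB)

lemma signed_perm_word_prod: "set ws \<subseteq> gensB n \<Longrightarrow> 1 \<le> n \<Longrightarrow> signed_perm n (word_prod ws)"
  by (induction ws) (simp_all add: word_prod_Nil word_prod_Cons signed_perm_id
      signed_perm_comp signed_perm_gensB)

lemma signed_perm_WB: "w \<in> WB n \<Longrightarrow> 1 \<le> n \<Longrightarrow> signed_perm n w"
  by (auto simp: WB_def signed_perm_word_prod)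

lemma WB_comp_gensB:
  assumes "w \<in> WB n" "g \<in> gensB n"
  shows "w \<circ> g \<in> WB n" "g \<circ> w \<in> WB n"
proof -
  obtain ws where "set ws \<subseteq> gensB n" "w = word_prod ws"
    using assms(1) by (auto simp: WB_def)
  with assms(2) show "w \<circ> g \<in> WB n"
    unfolding WB_def by (auto intro!: exI[of _ "ws @ [g]"] simp: word_prod_snoc)
  from \<open>set ws \<subseteq> gensB n\<close> \<open>w = word_prod ws\<close> assms(2) show "g \<circ> w \<in> WB n"
    unfolding WB_def by (auto intro!: exI[of _ "g # ws"] simp: word_prod_Cons)
qed

lemma inv_len_nonneg: "0 \<le> inv_len n w"
  by (auto simp: inv_len_def inversions_def negatives_def intro!: add_nonneg_nonneg sum_nonneg)

lemma inv_len_id: "inv_len n id = 0"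
  by (auto simp: inv_len_def inversions_def negatives_def intro!: sum.neutral)

lemma inv_len_comp_gensB_le:
  assumes "g \<in> gensB n" "signed_perm n w" "1 \<le> n"
  shows "inv_len n (w \<circ> g) \<le> inv_len n w + 2"
  using assms inv_len_comp_tB[OF assms(2,3)] inv_len_comp_sB[OF assms(2)]
  by (auto simp: gensB_def)

lemma inv_len_word_prod_le:
  "set ws \<subseteq> gensB n \<Longrightarrow> 1 \<le> n \<Longrightarrow> inv_len n (word_prod ws) \<le> 2 * int (length ws)"
proof (induction ws rule: rev_induct)
  case (snoc g ws)
  then show ?case
    using inv_len_comp_gensB_le[of g n "word_prod ws"] signed_perm_word_prod[of ws n]
    unfolding word_prod_snoc by (simp del: comp_apply)
qed (simp add: word_prod_Nil inv_len_id)

lemma exists_word_of_inv_len: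
  assumes w: "signed_perm n w" and n: "1 \<le> n"
  shows "\<exists>ws. set ws \<subseteq> gensB n \<and> word_prod ws = w \<and> 2 * int (length ws) = inv_len n w"
  using w
proof (induction "nat (inv_len n w)" arbitrary: w rule: less_induct)
  case less
  show ?case
  proof (cases "w = id")
    case True
    then show ?thesis by (auto simp: word_prod_Nil inv_len_id)
  next
    case False
    then obtain g where g: "g \<in> gensB n" "inv_len n (w \<circ> g) = inv_len n w - 2"
      using inv_len_descent[OF less.prems n] by blast
    moreover have "signed_perm n (w \<circ> g)"
      using signed_perm_comp[OF less.prems signed_perm_gensB[OF g(1) n]] .
    moreover have "nat (inv_len n (w \<circ> g)) < nat (inv_len n w)"
      using g(2) inv_len_nonneg[of n "w \<circ> g"] by simp
    ultimately obtain ws where "set ws \<subseteq> gensB n" "word_prod ws = w \<circ> g"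
        "2 * int (length ws) = inv_len n w - 2"
      using less.hyps by metis
    moreover have "w \<circ> g \<circ> g = w"
      using gensB_involution[OF g(1)] by (simp add: comp_assoc)
    ultimately show ?thesis
      using g(1) by (intro exI[of _ "ws @ [g]"]) (auto simp: word_prod_snoc)
  qed
qed

lemma lenB_eq_inv_len:
  assumes w: "w \<in> WB n" and n: "1 \<le> n"
  shows "2 * int (lenB n w) = inv_len n w"
proof -
  let ?P = "\<lambda>m. \<exists>ws. length ws = m \<and> set ws \<subseteq> gensB n \<and> word_prod ws = w"
  obtain ws where ws: "set ws \<subseteq> gensB n" "word_prod ws = w" "2 * int (length ws) = inv_len n w"
    using exists_word_of_inv_len[OF signed_perm_WB[OF w n] n] by blast
  then have "lenB n w \<le> length ws"
    unfolding lenB_def by (intro Least_le) blast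
  moreover obtain vs where "length vs = lenB n w" "set vs \<subseteq> gensB n" "word_prod vs = w"
    using LeastI[of ?P "length ws"] ws by (auto simp: lenB_def)
  then have "inv_len n w \<le> 2 * int (lenB n w)"
    using inv_len_word_prod_le[of vs n] n by simp
  ultimately show ?thesis
    using ws(3) by linarith
qed

lemma lenB_comp_sB_gt_iff:
  assumes x: "x \<in> WB n" and k: "1 \<le> k" "k + 1 \<le> n"
  shows "lenB n (x \<circ> sB k) > lenB n x \<longleftrightarrow> x (int k) < x (int k + 1)"
proof -
  have "2 * int (lenB n (x \<circ> sB k)) = 2 * int (lenB n x) + (if x (int k) < x (int k + 1) then 2 else -2)"
    using lenB_eq_inv_len[OF WB_comp_gensB(1)[OF x sB_in_gensB[OF k]]] lenB_eq_inv_len[OF x]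
      inv_len_comp_sB[OF signed_perm_WB[OF x] k] k by simp
  then show ?thesis
    by (auto split: if_splits)
qed

theorem proposition2p12:
  fixes n k :: nat and x :: "int \<Rightarrow> int"
  assumes "x \<in> WB n" and "1 \<le> k" and "k \<le> n - 1"
  shows "lenB n (x \<circ> sB k) > lenB n x \<longleftrightarrow> lenB n (tB \<circ> x \<circ> sB k) > lenB n (tB \<circ> x)"
proof -
  have k: "1 \<le> k" "k + 1 \<le> n" and n: "1 \<le> n"
    using assms by auto
  have tx: "tB \<circ> x \<in> WB n"
    using WB_comp_gensB(2)[OF assms(1) tB_in_gensB] .
  have support: "int k \<in> signed_support n" "int k + 1 \<in> signed_support n" "- int k \<in> signed_support n"
    using k by (auto simp: signed_support_def)
  have x: "signed_perm n x"
    using signed_perm_WB[OF assms(1) n] .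
  have "x (int k) \<noteq> 0" "x (int k + 1) \<noteq> 0"
    using support signed_perm_in_support[OF x] by (fastforce simp: signed_support_def)+
  moreover have "x (int k + 1) \<noteq> - x (int k)"
    using support signed_perm_eq_iff[OF x, of "int k + 1" "- int k"] signed_perm_odd[OF x] by auto
  ultimately have "tB (x (int k)) < tB (x (int k + 1)) \<longleftrightarrow> x (int k) < x (int k + 1)"
    by (intro tB_less_iff) auto
  then show ?thesis
    using lenB_comp_sB_gt_iff[OF assms(1) k] lenB_comp_sB_gt_iff[OF tx k] by simp
qed

end
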